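(* Let $P_1,P_2\in\mathcal P_f$ satisfy $P_1^X=P_2^X$, $P_1^Y=P_2^Y$ and $OR(P_1)=OR(P_2)$ (i.e. their odds ratio functions agree $P_1^X\times P_1^Y$-almost everywhere). Then $P_1=P_2$.
   Context: Let $(\Omega_X,\mathcal B_X)$, $(\Omega_Y,\mathcal B_Y)$ be nonempty measurable spaces, $\Omega=\Omega_X\times\Omega_Y$ with the product $\sigma$-algebra, and $\mathcal P$ the set of probability measures on $\Omega$. For $P\in\mathcal P$ let $P^X,P^Y$ be its marginals and $P^{XY}=P^X\times P^Y$. Let $\mathcal P_{\ll}=\{P\in\mathcal P: P\ll P^{XY}\ll P\}$. For $P\in\mathcal P_\ll$ with (positive) density $p=dP/dP^{XY}$ and fixed reference points $x^\circ\in\Omega_X$, $y^\circ\in\Omega_Y$, the odds ratio function is $OR_p(x,y)=\dfrac{p(x,y)\,p(x^\circ,y^\circ)}{p(x,y^\circ)\,p(x^\circ,y)}$; it is determined up to $P^{XY}$-a.e. equality and denoted $OR(P)$. The Kullback–Leibler information is $I(Q\mid P)=\int\log(dQ/dP)\,dQ$. Let $\mathcal P_f=\{P\in\mathcal P_\ll: I(P^{XY}\mid P)<\infty\}$, i.e. $\log p$ is $P^{XY}$-integrable. *)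

theory Defs
  imports "HOL-Probability.Probability"
begin

definition marg_X :: "'a measure \<Rightarrow> ('a \<times> 'b) measure \<Rightarrow> 'a measure" where
  "marg_X MX P = distr P MX fst"

definition marg_Y :: "'b measure \<Rightarrow> ('a \<times> 'b) measure \<Rightarrow> 'b measure" where
  "marg_Y MY P = distr P MY snd"

definition prod_marg :: "'a measure \<Rightarrow> 'b measure \<Rightarrow> ('a \<times> 'b) measure \<Rightarrow> ('a \<times> 'b) measure" where
  "prod_marg MX MY P = marg_X MX P \<Otimes>\<^sub>M marg_Y MY P"

text \<open>The class P_ll: probability measures on the product space with P << P^{XY} << P.
  Note: absolutely_continuous M N means N << M.\<close>
definition in_Pll :: "'a measure \<Rightarrow> 'b measure \<Rightarrow> ('a \<times> 'b) measure \<Rightarrow> bool" where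
  "in_Pll MX MY P \<longleftrightarrow> prob_space P \<and> sets P = sets (MX \<Otimes>\<^sub>M MY) \<and>
     absolutely_continuous (prod_marg MX MY P) P \<and> absolutely_continuous P (prod_marg MX MY P)"

definition in_Pf :: "'a measure \<Rightarrow> 'b measure \<Rightarrow> ('a \<times> 'b) measure \<Rightarrow> bool" where
  "in_Pf MX MY P \<longleftrightarrow> in_Pll MX MY P \<and>
     integrable (prod_marg MX MY P) (\<lambda>z. ln (enn2real (RN_deriv (prod_marg MX MY P) P z)))"

definition is_pos_density :: "'a measure \<Rightarrow> 'b measure \<Rightarrow> ('a \<times> 'b) measure \<Rightarrow> ('a \<times> 'b \<Rightarrow> real) \<Rightarrow> bool" where
  "is_pos_density MX MY P p \<longleftrightarrow> p \<in> borel_measurable (MX \<Otimes>\<^sub>M MY) \<and>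
     (\<forall>z\<in>space (MX \<Otimes>\<^sub>M MY). 0 < p z) \<and>
     P = density (prod_marg MX MY P) (\<lambda>z. ennreal (p z))"

definition odds_ratio :: "('a \<times> 'b \<Rightarrow> real) \<Rightarrow> 'a \<Rightarrow> 'b \<Rightarrow> 'a \<times> 'b \<Rightarrow> real" where
  "odds_ratio p x0 y0 z = p (fst z, snd z) * p (x0, y0) / (p (fst z, y0) * p (x0, snd z))"

end

theory Submission
  imports Defs
begin

(* Let p1, p2 be positive densities of P1, P2 with respect to the common product of
   marginals M = PX x PY, and let r = ln p1 - ln p2 be their log density ratio.
   Equality of the odds ratios means exactly that r is additive:
     r(x,y) = u(x) + v(y),  u(x) = r(x,y0),  v(y) = r(x0,y) - r(x0,y0),   M-a.e.
   Since ln p1, ln p2 are M-integrable (the class P_f), so is r, and Fubini shows that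
   u and v are integrable for PX and PY.  Because P1 and P2 share the marginals PX, PY,
   the P_i-expectation of u(x) + v(y) is the same number for i = 1, 2; hence
     integral of (p1 - p2) (ln p1 - ln p2) dM = E_P1 r - E_P2 r = 0.
   The integrand is nonnegative (ln is increasing), so p1 = p2 M-a.e. and P1 = P2. *)

lemma sets_marg_X [simp]: "sets (marg_X MX P) = sets MX"
  and space_marg_X [simp]: "space (marg_X MX P) = space MX"
  and sets_marg_Y [simp]: "sets (marg_Y MY P) = sets MY"
  and space_marg_Y [simp]: "space (marg_Y MY P) = space MY"
  by (simp_all add: marg_X_def marg_Y_def)

lemma sets_prod_marg [simp]: "sets (prod_marg MX MY P) = sets (MX \<Otimes>\<^sub>M MY)"
  unfolding prod_marg_def by (rule sets_pair_measure_cong) simp_all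

lemma space_prod_marg [simp]: "space (prod_marg MX MY P) = space (MX \<Otimes>\<^sub>M MY)"
  unfolding prod_marg_def by (simp add: space_pair_measure)

lemma prod_marg_eq:
  assumes "marg_X MX P1 = marg_X MX P2" and "marg_Y MY P1 = marg_Y MY P2"
  shows "prod_marg MX MY P1 = prod_marg MX MY P2"
  using assms by (simp add: prod_marg_def)

lemma pair_prob_space_marg:
  assumes "prob_space P" and "sets P = sets (MX \<Otimes>\<^sub>M MY)"
  shows "pair_prob_space (marg_X MX P) (marg_Y MY P)"
proof -
  have "fst \<in> measurable P MX" and "snd \<in> measurable P MY"
    by (simp_all add: measurable_cong_sets[OF assms(2) refl])
  then have "prob_space (marg_X MX P)" and "prob_space (marg_Y MY P)"
    unfolding marg_X_def marg_Y_def using assms(1) by (simp_all add: prob_space.prob_space_distr)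
  then show ?thesis
    by (simp add: pair_prob_space_def pair_sigma_finite_def prob_space_imp_sigma_finite)
qed

lemma pos_densityD:
  assumes "is_pos_density MX MY P p"
  shows "p \<in> borel_measurable (prod_marg MX MY P)"
    and "\<forall>z\<in>space (prod_marg MX MY P). 0 < p z"
    and "P = density (prod_marg MX MY P) (\<lambda>z. ennreal (p z))"
  using assms unfolding is_pos_density_def
  by (auto simp: measurable_cong_sets[OF sets_prod_marg refl])

text \<open>For P in P_f with positive density p, the function ln p is integrable for the
  product of marginals, since p agrees a.e. with the Radon-Nikodym derivative.\<close>
lemma integrable_ln_pos_density:
  assumes Pf: "in_Pf MX MY P" and dens: "is_pos_density MX MY P p"
  shows "integrable (prod_marg MX MY P) (\<lambda>z. ln (p z))"
proof -
  let ?M = "prod_marg MX MY P"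
  note p_meas = pos_densityD(1)[OF dens] and pos = pos_densityD(2)[OF dens]
  have "sigma_finite_measure P"
    using Pf unfolding in_Pf_def in_Pll_def by (simp add: prob_space_imp_sigma_finite)
  then have RN: "AE z in ?M. ennreal (p z) = RN_deriv ?M P z"
    using p_meas pos_densityD(3)[OF dens] by (intro RN_deriv_unique_sigma_finite) auto
  have ln_meas: "(\<lambda>z. ln (p z)) \<in> borel_measurable ?M"
    using p_meas by measurable
  have "AE z in ?M. ln (enn2real (RN_deriv ?M P z)) = ln (p z)"
    using RN AE_space
  proof eventually_elim
    case (elim z)
    then have "0 \<le> p z" using pos by (simp add: less_imp_le)
    then show ?case by (simp add: elim(1)[symmetric])
  qed
  moreover have "integrable ?M (\<lambda>z. ln (enn2real (RN_deriv ?M P z)))"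
    using Pf unfolding in_Pf_def by simp
  ultimately show ?thesis
    using ln_meas by (blast intro: integrable_cong_AE_imp)
qed

definition log_ratio :: "('c \<Rightarrow> real) \<Rightarrow> ('c \<Rightarrow> real) \<Rightarrow> 'c \<Rightarrow> real" where
  "log_ratio p q z = ln (p z) - ln (q z)"

lemma integrable_log_ratio:
  assumes "in_Pf MX MY P" "is_pos_density MX MY P p"
    and "in_Pf MX MY Q" "is_pos_density MX MY Q q"
    and "prod_marg MX MY Q = prod_marg MX MY P"
  shows "integrable (prod_marg MX MY P) (log_ratio p q)"
  using integrable_ln_pos_density[OF assms(1,2)] integrable_ln_pos_density[OF assms(3,4)] assms(5)
  unfolding log_ratio_def by simp

section \<open>Equal odds ratios give an additive log density ratio\<close>

lemma ln_odds_ratio: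
  assumes "0 < p (x, y)" "0 < p (x0, y0)" "0 < p (x, y0)" "0 < p (x0, y)"
  shows "ln (odds_ratio p x0 y0 (x, y)) = ln (p (x, y)) + ln (p (x0, y0)) - ln (p (x, y0)) - ln (p (x0, y))"
  using assms by (simp add: odds_ratio_def ln_div ln_mult)

lemma log_ratio_additive_of_odds_ratio_eq:
  assumes "0 < p (x, y)" "0 < p (x0, y0)" "0 < p (x, y0)" "0 < p (x0, y)"
    and "0 < q (x, y)" "0 < q (x0, y0)" "0 < q (x, y0)" "0 < q (x0, y)"
    and "odds_ratio p x0 y0 (x, y) = odds_ratio q x0 y0 (x, y)"
  shows "log_ratio p q (x, y) = log_ratio p q (x, y0) + (log_ratio p q (x0, y) - log_ratio p q (x0, y0))"
proof -
  have "ln (odds_ratio p x0 y0 (x, y)) = ln (odds_ratio q x0 y0 (x, y))"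
    using assms(9) by simp
  then show ?thesis
    using ln_odds_ratio[of p, OF assms(1-4)] ln_odds_ratio[of q, OF assms(5-8)]
    unfolding log_ratio_def by linarith
qed

lemma AE_log_ratio_additive:
  assumes "x0 \<in> space MX" and "y0 \<in> space MY" and M: "space M = space (MX \<Otimes>\<^sub>M MY)"
    and p: "\<forall>z\<in>space M. 0 < p z" and q: "\<forall>z\<in>space M. 0 < q z"
    and OR: "AE z in M. odds_ratio p x0 y0 z = odds_ratio q x0 y0 z"
  shows "AE z in M. log_ratio p q z =
           log_ratio p q (fst z, y0) + (log_ratio p q (x0, snd z) - log_ratio p q (x0, y0))"
  using OR AE_space
proof eventually_elim
  case (elim z)
  obtain x y where z: "z = (x, y)" by (cases z)
  have "x \<in> space MX" "y \<in> space MY"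
    using elim(2) z M by (auto simp: space_pair_measure)
  then have pts: "(x, y) \<in> space (MX \<Otimes>\<^sub>M MY)" "(x0, y0) \<in> space (MX \<Otimes>\<^sub>M MY)"
      "(x, y0) \<in> space (MX \<Otimes>\<^sub>M MY)" "(x0, y) \<in> space (MX \<Otimes>\<^sub>M MY)"
    using assms(1,2) by (auto simp: space_pair_measure)
  show ?case
    unfolding z fst_conv snd_conv
    by (rule log_ratio_additive_of_odds_ratio_eq) (use elim(1) pts p q M z in auto)
qed

section \<open>Integrating an additive function\<close>

text \<open>Fubini: if u(x) + v(y) is integrable for a product of probability measures, then
  so are u and v (fix a typical section and subtract a constant).\<close>
lemma (in pair_prob_space) integrable_additive_components:
  fixes u :: "'a \<Rightarrow> real" and v :: "'b \<Rightarrow> real"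
  assumes int: "integrable (M1 \<Otimes>\<^sub>M M2) (\<lambda>z. u (fst z) + v (snd z))"
  shows "integrable M1 u" and "integrable M2 v"
proof -
  have "AE y in M2. integrable M1 (\<lambda>x. u x + v y)"
    using AE_integrable_snd[of "\<lambda>x y. u x + v y"] int by (simp add: case_prod_beta')
  then obtain y where "integrable M1 (\<lambda>x. u x + v y)"
    using eventually_happens'[OF M2.ae_filter_bot] by blast
  then have "integrable M1 (\<lambda>x. (u x + v y) - v y)"
    by (intro Bochner_Integration.integrable_diff) auto
  then show "integrable M1 u" by simp
next
  have "AE x in M1. integrable M2 (\<lambda>y. u x + v y)"
    using AE_integrable_fst'[OF int] by simp
  then obtain x where "integrable M2 (\<lambda>y. u x + v y)"
    using eventually_happens'[OF M1.ae_filter_bot] by blast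
  then have "integrable M2 (\<lambda>y. (u x + v y) - u x)"
    by (intro Bochner_Integration.integrable_diff) auto
  then show "integrable M2 v" by simp
qed

lemma integrable_additive_components_marg:
  fixes u :: "'a \<Rightarrow> real" and v :: "'b \<Rightarrow> real"
  assumes P: "prob_space P" "sets P = sets (MX \<Otimes>\<^sub>M MY)"
    and u: "u \<in> borel_measurable MX" and v: "v \<in> borel_measurable MY"
    and h: "integrable (prod_marg MX MY P) h"
    and AE: "AE z in prod_marg MX MY P. h z = u (fst z) + v (snd z)"
  shows "integrable (marg_X MX P) u" and "integrable (marg_Y MY P) v"
proof -
  interpret pair_prob_space "marg_X MX P" "marg_Y MY P"
    using pair_prob_space_marg[OF P] .
  have "(\<lambda>z. u (fst z) + v (snd z)) \<in> borel_measurable (prod_marg MX MY P)"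
    using u v by (simp add: measurable_cong_sets[OF sets_prod_marg refl])
  then have "integrable (prod_marg MX MY P) (\<lambda>z. u (fst z) + v (snd z))"
    using h AE by (blast intro: integrable_cong_AE_imp)
  then show "integrable (marg_X MX P) u" and "integrable (marg_Y MY P) v"
    using integrable_additive_components unfolding prod_marg_def by blast+
qed

lemma integral_additive_marginals:
  fixes u :: "'a \<Rightarrow> real" and v :: "'b \<Rightarrow> real"
  assumes sets: "sets P = sets (MX \<Otimes>\<^sub>M MY)"
    and u: "integrable (marg_X MX P) u" and v: "integrable (marg_Y MY P) v"
  shows "integrable P (\<lambda>z. u (fst z) + v (snd z))"
    and "(\<integral>z. u (fst z) + v (snd z) \<partial>P) = (\<integral>x. u x \<partial>marg_X MX P) + (\<integral>y. v y \<partial>marg_Y MY P)"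
proof -
  have fst: "fst \<in> measurable P MX" and snd: "snd \<in> measurable P MY"
    by (simp_all add: measurable_cong_sets[OF sets refl])
  have u_meas: "u \<in> borel_measurable MX"
    using borel_measurable_integrable[OF u] by (simp add: measurable_cong_sets[OF sets_marg_X refl])
  have v_meas: "v \<in> borel_measurable MY"
    using borel_measurable_integrable[OF v] by (simp add: measurable_cong_sets[OF sets_marg_Y refl])
  have uP: "integrable P (\<lambda>z. u (fst z))"
    using u unfolding marg_X_def by (simp add: integrable_distr_eq[OF fst u_meas])
  have vP: "integrable P (\<lambda>z. v (snd z))"
    using v unfolding marg_Y_def by (simp add: integrable_distr_eq[OF snd v_meas])
  show "integrable P (\<lambda>z. u (fst z) + v (snd z))"
    using uP vP by simp
  show "(\<integral>z. u (fst z) + v (snd z) \<partial>P) = (\<integral>x. u x \<partial>marg_X MX P) + (\<integral>y. v y \<partial>marg_Y MY P)"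
    using uP vP unfolding marg_X_def marg_Y_def
    by (simp add: integral_distr[OF fst u_meas] integral_distr[OF snd v_meas])
qed

lemma integral_density_additive:
  fixes u :: "'a \<Rightarrow> real" and v :: "'b \<Rightarrow> real"
  assumes sets: "sets P = sets (MX \<Otimes>\<^sub>M MY)" and P: "P = density M (\<lambda>z. ennreal (p z))"
    and p: "p \<in> borel_measurable M" "\<forall>z\<in>space M. 0 \<le> p z"
    and h: "h \<in> borel_measurable M" and AE: "AE z in M. h z = u (fst z) + v (snd z)"
    and u: "integrable (marg_X MX P) u" and v: "integrable (marg_Y MY P) v"
  shows "integrable M (\<lambda>z. p z * h z)"
    and "(\<integral>z. p z * h z \<partial>M) = (\<integral>x. u x \<partial>marg_X MX P) + (\<integral>y. v y \<partial>marg_Y MY P)"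
proof -
  have sets_M: "sets M = sets P"
    using P by simp
  have p_nn: "AE z in M. 0 \<le> p z"
    using p(2) by (simp add: AE_I2)
  have hP: "h \<in> borel_measurable P"
    using h by (simp add: measurable_cong_sets[OF sets_M refl])
  note uv = integral_additive_marginals[OF sets u v]
  have AEP: "AE z in P. h z = u (fst z) + v (snd z)"
    unfolding P using AE p(1) by (subst AE_density) auto
  have "integrable P h"
    using integrable_cong_AE_imp[OF uv(1) hP] AEP by (simp add: eq_commute)
  then show "integrable M (\<lambda>z. p z * h z)"
    using integrable_density[OF h p(1) p_nn] P by simp
  have "(\<integral>z. p z * h z \<partial>M) = (\<integral>z. h z \<partial>P)"
    using integral_density[OF h p(1) p_nn] P by simp
  also have "\<dots> = (\<integral>z. u (fst z) + v (snd z) \<partial>P)"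
    using AEP by (rule integral_cong_AE[OF hP borel_measurable_integrable[OF uv(1)]])
  finally show "(\<integral>z. p z * h z \<partial>M) = (\<integral>x. u x \<partial>marg_X MX P) + (\<integral>y. v y \<partial>marg_Y MY P)"
    using uv(2) by simp
qed

section \<open>Vanishing Jeffreys divergence\<close>

text \<open>Since ln is strictly increasing, (a - b)(ln a - ln b) is nonnegative and
  vanishes only for a = b.\<close>
lemma diff_mult_ln_diff_nonneg:
  fixes a b :: real
  assumes "0 < a" "0 < b"
  shows "0 \<le> (a - b) * (ln a - ln b)"
proof (cases "a \<le> b")
  case True
  then show ?thesis using assms by (simp add: mult_nonpos_nonpos)
next
  case False
  then show ?thesis using assms by simp
qed

lemma diff_mult_ln_diff_eq_0:
  fixes a b :: real
  assumes "0 < a" "0 < b" "(a - b) * (ln a - ln b) = 0"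
  shows "a = b"
  using assms by auto

lemma density_eq_of_jeffreys_zero:
  assumes p: "p \<in> borel_measurable M" "\<forall>z\<in>space M. 0 < p z"
    and q: "q \<in> borel_measurable M" "\<forall>z\<in>space M. 0 < q z"
    and int: "integrable M (\<lambda>z. (p z - q z) * log_ratio p q z)"
    and zero: "(\<integral>z. (p z - q z) * log_ratio p q z \<partial>M) = 0"
  shows "density M (\<lambda>z. ennreal (p z)) = density M (\<lambda>z. ennreal (q z))"
proof -
  have "AE z in M. 0 \<le> (p z - q z) * log_ratio p q z"
    using p(2) q(2) by (intro AE_I2) (simp add: log_ratio_def diff_mult_ln_diff_nonneg)
  then have "AE z in M. (p z - q z) * log_ratio p q z = 0"
    using integral_nonneg_eq_0_iff_AE[OF int] zero by blast
  then have "AE z in M. ennreal (p z) = ennreal (q z)"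
    using AE_space
  proof eventually_elim
    case (elim z)
    have "p z = q z"
      using p(2) q(2) elim diff_mult_ln_diff_eq_0[of "p z" "q z"]
      unfolding log_ratio_def by blast
    then show ?case by simp
  qed
  moreover have "(\<lambda>z. ennreal (p z)) \<in> borel_measurable M" "(\<lambda>z. ennreal (q z)) \<in> borel_measurable M"
    using p(1) q(1) by simp_all
  ultimately show ?thesis
    by (intro density_cong)
qed

theorem theorem1:
  fixes MX :: "'a measure" and MY :: "'b measure"
    and P1 P2 :: "('a \<times> 'b) measure" and x0 :: 'a and y0 :: 'b
  assumes "x0 \<in> space MX" and "y0 \<in> space MY"
    and "in_Pf MX MY P1" and "in_Pf MX MY P2"
    and "marg_X MX P1 = marg_X MX P2"
    and "marg_Y MY P1 = marg_Y MY P2"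
    and "\<exists>p1 p2. is_pos_density MX MY P1 p1 \<and> is_pos_density MX MY P2 p2 \<and>
           (AE z in prod_marg MX MY P1. odds_ratio p1 x0 y0 z = odds_ratio p2 x0 y0 z)"
  shows "P1 = P2"
proof -
  obtain p1 p2 where d1: "is_pos_density MX MY P1 p1" and d2: "is_pos_density MX MY P2 p2"
    and OR: "AE z in prod_marg MX MY P1. odds_ratio p1 x0 y0 z = odds_ratio p2 x0 y0 z"
    using assms(7) by blast
  define M where "M = prod_marg MX MY P1"
  have M2: "prod_marg MX MY P2 = M"
    unfolding M_def using prod_marg_eq[OF assms(5,6)] by simp
  note dens1 = pos_densityD[OF d1, folded M_def] and dens2 = pos_densityD[OF d2, unfolded M2]
  have sets1: "sets P1 = sets (MX \<Otimes>\<^sub>M MY)" and sets2: "sets P2 = sets (MX \<Otimes>\<^sub>M MY)"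
    using assms(3,4) unfolding in_Pf_def in_Pll_def by simp_all
  have [measurable]: "p1 \<in> borel_measurable (MX \<Otimes>\<^sub>M MY)" "p2 \<in> borel_measurable (MX \<Otimes>\<^sub>M MY)"
    using d1 d2 unfolding is_pos_density_def by simp_all
  define u where "u x = log_ratio p1 p2 (x, y0)" for x
  define v where "v y = log_ratio p1 p2 (x0, y) - log_ratio p1 p2 (x0, y0)" for y
  have u_meas: "u \<in> borel_measurable MX" and v_meas: "v \<in> borel_measurable MY"
    unfolding u_def v_def log_ratio_def using assms(1,2) by measurable
  have r_additive: "AE z in M. log_ratio p1 p2 z = u (fst z) + v (snd z)"
    using AE_log_ratio_additive[OF assms(1,2) _ dens1(2) dens2(2)] OR
    unfolding M_def u_def v_def by simp
  have r_int: "integrable M (log_ratio p1 p2)"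
    using integrable_log_ratio[OF assms(3) d1 assms(4) d2] M2 unfolding M_def by simp
  have r_meas: "log_ratio p1 p2 \<in> borel_measurable M"
    using borel_measurable_integrable[OF r_int] .
  have u: "integrable (marg_X MX P1) u" and v: "integrable (marg_Y MY P1) v"
    using integrable_additive_components_marg[OF _ sets1 u_meas v_meas, of "log_ratio p1 p2"]
      assms(3) r_int r_additive unfolding M_def in_Pf_def in_Pll_def by blast+
  text \<open>Both P1 and P2 give r the same expectation, so the Jeffreys divergence vanishes.\<close>
  have nn1: "\<forall>z\<in>space M. 0 \<le> p1 z" and nn2: "\<forall>z\<in>space M. 0 \<le> p2 z"
    using dens1(2) dens2(2) by (simp_all add: less_imp_le)
  note E1 = integral_density_additive[OF sets1 dens1(3) dens1(1) nn1 r_meas r_additive u v]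
  note E2 = integral_density_additive[OF sets2 dens2(3) dens2(1) nn2 r_meas r_additive,
      folded assms(5,6), OF u v]
  have "density M (\<lambda>z. ennreal (p1 z)) = density M (\<lambda>z. ennreal (p2 z))"
    using dens1 dens2 E1 E2
    by (intro density_eq_of_jeffreys_zero) (auto simp: left_diff_distrib)
  then show ?thesis
    using dens1(3) dens2(3) by simp
qed

end
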